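(* Let $f\in S_{k,n,d,s}$ and write $f=\sum_{m\in X_k^*} f_m\otimes m$ with $f_m\in\mathbb{F}\langle X_1\rangle\otimes\cdots\otimes\mathbb{F}\langle X_{k-1}\rangle$. Then for every $m\in X_k^*$, the polynomial $f_m$ has an ABP of size $s(d+1)$ with $d$ layers.
   Context: $\mathbb{F}$ is a field. Let $X_j=\{x_{1j},\dots,x_{nj}\}$, $j=1,\dots,k$, be mutually disjoint sets of variables, $\mathbb{F}\langle X_j\rangle$ the free noncommutative polynomial ring, and consider $\mathbb{F}\langle X_1\rangle\otimes\cdots\otimes\mathbb{F}\langle X_k\rangle$, where $1\otimes\cdots\otimes x_{ij}\otimes\cdots\otimes1$ plays the role of the variable $x_{ij}$. Every element can be uniquely written as $\sum_{m\in X_k^*} f_m\otimes m$ with $f_m$ in the tensor product of the first $k-1$ factors. An algebraic branching program (ABP) is a layered directed acyclic graph with a source and a sink, edges only between consecutive layers, each edge labeled by an affine linear form in the variables; it computes the sum over source-to-sink paths of the ordered product of labels; its size is its number of nodes. $S_{k,n,d,s}$ is the set of polynomials in $\mathbb{F}\langle X_1\rangle\otimes\cdots\otimes\mathbb{F}\langle X_k\rangle$ computed by ABPs of size $s$ with $d$ layers. *)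

theory Defs
  imports Main
begin

text \<open>Elements of F<X_1> (x) ... (x) F<X_k>, X_j = {x_1j,...,x_nj}.
  A monomial is a list of k words; the j-th word (a list of indices i < n)
  is the word over X_(j+1) (0-based).  The tensor product basis is exactly these k-tuples of words.\<close>

type_synonym mono = "nat list list"
type_synonym 'a tpoly = "mono \<Rightarrow> 'a"

definition one_mono :: "nat \<Rightarrow> mono" where
  "one_mono k = replicate k []"

text \<open>monomial of the variable x_(i+1)(j+1) (0-based indices i < n, j < k)\<close>
definition var_mono :: "nat \<Rightarrow> nat \<Rightarrow> nat \<Rightarrow> mono" where
  "var_mono k i j = (replicate k [])[j := [i]]"

definition splits :: "mono \<Rightarrow> (mono \<times> mono) set" where
  "splits M = {(M1, M2). length M1 = length M \<and> length M2 = length M \<and>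
                 (\<forall>j < length M. M1 ! j @ M2 ! j = M ! j)}"

definition tmult :: "'a::comm_ring_1 tpoly \<Rightarrow> 'a tpoly \<Rightarrow> 'a tpoly" where
  "tmult p q = (\<lambda>M. \<Sum>(M1, M2) \<in> splits M. p M1 * q M2)"

definition tone :: "nat \<Rightarrow> 'a::comm_ring_1 tpoly" where
  "tone k = (\<lambda>M. if M = one_mono k then 1 else 0)"

primrec tprod :: "nat \<Rightarrow> 'a::comm_ring_1 tpoly list \<Rightarrow> 'a tpoly" where
  "tprod k [] = tone k"
| "tprod k (p # ps) = tmult p (tprod k ps)"

definition aff_poly :: "nat \<Rightarrow> nat \<Rightarrow> 'a::comm_ring_1 \<times> (nat \<Rightarrow> nat \<Rightarrow> 'a) \<Rightarrow> 'a tpoly" where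
  "aff_poly k n la = (\<lambda>M. (if M = one_mono k then fst la else 0)
      + (\<Sum>i<n. \<Sum>j<k. if M = var_mono k i j then snd la i j else 0))"

definition paths :: "(nat \<times> nat) set \<Rightarrow> nat \<Rightarrow> nat \<Rightarrow> nat list set" where
  "paths E src snk = {vs. vs \<noteq> [] \<and> hd vs = src \<and> last vs = snk \<and>
       (\<forall>t. Suc t < length vs \<longrightarrow> (vs ! t, vs ! Suc t) \<in> E)}"

definition abp_poly :: "nat \<Rightarrow> nat \<Rightarrow> (nat \<times> nat) set \<Rightarrow> nat \<Rightarrow> nat \<Rightarrow>
    (nat \<Rightarrow> nat \<Rightarrow> 'a::comm_ring_1 \<times> (nat \<Rightarrow> nat \<Rightarrow> 'a)) \<Rightarrow> 'a tpoly" where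
  "abp_poly k n E src snk lab = (\<lambda>M. \<Sum>vs \<in> paths E src snk.
      tprod k (map (\<lambda>t. aff_poly k n (lab (vs ! t) (vs ! Suc t))) [0..<length vs - 1]) M)"

definition abp_computes :: "nat \<Rightarrow> nat \<Rightarrow> nat \<Rightarrow> nat \<Rightarrow> 'a::comm_ring_1 tpoly \<Rightarrow> bool" where
  "abp_computes k n d s f \<longleftrightarrow>
     (\<exists>(V :: nat set) E layer src snk lab.
        finite V \<and> card V = s \<and> E \<subseteq> V \<times> V \<and>
        (\<forall>(u, v) \<in> E. layer v = Suc (layer u)) \<and>
        (\<forall>v \<in> V. layer v < d) \<and>
        src \<in> V \<and> snk \<in> V \<and> layer src = 0 \<and> layer snk = d - 1 \<and>
        f = abp_poly k n E src snk lab)"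

definition S_abp :: "nat \<Rightarrow> nat \<Rightarrow> nat \<Rightarrow> nat \<Rightarrow> 'a::comm_ring_1 tpoly set" where
  "S_abp k n d s = {f. abp_computes k n d s f}"

end

theory Submission
  imports Defs "HOL-Library.Nat_Bijection" "HOL-Library.Sublist"
begin

text \<open>
  Run the given ABP while reading the word m in the last tensor factor: its nodes are the pairs
  (v, t) with t \<le> |m|, meaning ``at v, with the first t letters of m already read''.  Every edge
  u \<rightarrow> v is copied on each level t, where the variables of the last factor become invisible,
  and gives an extra edge (u, t) \<rightarrow> (v, t + 1) labelled by the scalar coefficient of the
  variable m_t of the last factor.  Expanding both programs along their first edge shows,
  by induction on the layers, that the new program computes f_m between (src, 0) and
  (snk, |m|).  Reading a letter also advances the layer, so at most d - 1 letters can be read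
  and f_m = 0 if |m| \<ge> d; otherwise the levels 0, \<dots>, d give exactly s (d + 1) nodes.
\<close>

type_synonym 'a aff_form = "'a \<times> (nat \<Rightarrow> nat \<Rightarrow> 'a)"

lemma finite_splits: "finite (splits X)"
proof -
  define S where "S = (\<Union>x\<in>set X. set (prefixes x) \<union> set (suffixes x))"
  define A where "A = {M. set M \<subseteq> S \<and> length M = length X}"
  have "M1 \<in> A \<and> M2 \<in> A" if "(M1, M2) \<in> splits X" for M1 M2
  proof -
    from that have len: "length M1 = length X" "length M2 = length X"
      and app: "\<And>j. j < length X \<Longrightarrow> M1 ! j @ M2 ! j = X ! j"
      by (auto simp: splits_def)
    have "M1 ! j \<in> S \<and> M2 ! j \<in> S" if "j < length X" for j
    proof -
      have "prefix (M1 ! j) (X ! j)" "suffix (M2 ! j) (X ! j)"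
        using app[OF that, symmetric] by (rule prefixI, rule suffixI)
      then show ?thesis unfolding S_def by (intro conjI UN_I[OF nth_mem[OF that]]) simp_all
    qed
    then show ?thesis using len unfolding A_def by (auto simp: in_set_conv_nth)
  qed
  then have "splits X \<subseteq> A \<times> A" by auto
  moreover have "finite A" unfolding A_def S_def by (intro finite_lists_length_eq) auto
  ultimately show ?thesis by (meson finite_SigmaI finite_subset)
qed

lemma one_mono_splits_iff: "(one_mono (length X), Z) \<in> splits X \<longleftrightarrow> Z = X"
  unfolding splits_def one_mono_def by (auto intro: nth_equalityI)

lemma var_mono_splits_iff:
  assumes "j < length X"
  shows "(var_mono (length X) i j, Z) \<in> splits X \<longleftrightarrow>
     X ! j \<noteq> [] \<and> hd (X ! j) = i \<and> Z = X[j := tl (X ! j)]"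
proof
  assume "(var_mono (length X) i j, Z) \<in> splits X"
  then have len: "length Z = length X"
    and app: "\<And>j'. j' < length X \<Longrightarrow>
      (replicate (length X) [])[j := [i]] ! j' @ Z ! j' = X ! j'"
    by (auto simp: splits_def var_mono_def)
  have Xj: "X ! j = i # Z ! j" using app[OF assms] assms by simp
  have "Z ! j' = X[j := tl (X ! j)] ! j'" if "j' < length X" for j'
    using app[OF that] Xj that by (cases "j' = j") auto
  with len have "Z = X[j := tl (X ! j)]" by (intro nth_equalityI) auto
  moreover have "X ! j \<noteq> [] \<and> hd (X ! j) = i" using Xj by simp
  ultimately show "X ! j \<noteq> [] \<and> hd (X ! j) = i \<and> Z = X[j := tl (X ! j)]" by simp
next
  assume "X ! j \<noteq> [] \<and> hd (X ! j) = i \<and> Z = X[j := tl (X ! j)]"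
  then show "(var_mono (length X) i j, Z) \<in> splits X"
    using assms by (auto simp: splits_def var_mono_def nth_list_update)
qed

lemma sum_splits_fst_eq:
  fixes a :: "'a::comm_ring_1"
  assumes "\<And>Z. (Y, Z) \<in> splits X \<longleftrightarrow> P \<and> Z = Z0"
  shows "(\<Sum>(M1, M2)\<in>splits X. (if M1 = Y then a else 0) * h M2)
    = (if P then a * h Z0 else 0)"
proof -
  have "(\<Sum>(M1, M2)\<in>splits X. (if M1 = Y then a else 0) * h M2)
      = (\<Sum>p\<in>splits X. if p = (Y, Z0) then (if P then a * h Z0 else 0) else 0)"
  proof (rule sum.cong[OF refl])
    fix p assume "p \<in> splits X"
    moreover obtain M1 M2 where "p = (M1, M2)" by fastforce
    ultimately show "(case p of (M1, M2) \<Rightarrow> (if M1 = Y then a else 0) * h M2)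
        = (if p = (Y, Z0) then (if P then a * h Z0 else 0) else 0)"
      using assms[of M2] by auto
  qed
  also have "\<dots> = (if P then a * h Z0 else 0)"
    using assms by (simp add: sum.delta[OF finite_splits])
  finally show ?thesis .
qed

lemma tmult_aff_poly:
  assumes "length X = k"
  shows "tmult (aff_poly k n l) Q X = fst l * Q X +
    (\<Sum>j<k. if X ! j \<noteq> [] \<and> hd (X ! j) < n
            then snd l (hd (X ! j)) j * Q (X[j := tl (X ! j)]) else 0)"
proof -
  have "tmult (aff_poly k n l) Q X
      = (\<Sum>(M1, M2)\<in>splits X. (if M1 = one_mono k then fst l else 0) * Q M2)
        + (\<Sum>i<n. \<Sum>j<k. \<Sum>(M1, M2)\<in>splits X.
             (if M1 = var_mono k i j then snd l i j else 0) * Q M2)"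
    unfolding tmult_def aff_poly_def
    by (simp add: case_prod_unfold distrib_right sum.distrib sum_distrib_right
        sum.swap[of _ "splits X"])
  also have "(\<Sum>(M1, M2)\<in>splits X. (if M1 = one_mono k then fst l else 0) * Q M2) = fst l * Q X"
    using sum_splits_fst_eq[of "one_mono k" X True X] one_mono_splits_iff[of X] assms by simp
  also have "(\<Sum>i<n. \<Sum>j<k. \<Sum>(M1, M2)\<in>splits X.
               (if M1 = var_mono k i j then snd l i j else 0) * Q M2)
      = (\<Sum>i<n. \<Sum>j<k. if X ! j \<noteq> [] \<and> hd (X ! j) = i
                      then snd l i j * Q (X[j := tl (X ! j)]) else 0)"
    using assms var_mono_splits_iff[of _ X] by (intro sum.cong refl sum_splits_fst_eq) auto
  also have "\<dots> = (\<Sum>j<k. if X ! j \<noteq> [] \<and> hd (X ! j) < n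
                        then snd l (hd (X ! j)) j * Q (X[j := tl (X ! j)]) else 0)"
    by (subst sum.swap) (intro sum.cong refl, auto simp: sum.delta')
  finally show ?thesis .
qed

lemma tmult_aff_poly_const:
  assumes "length X = k"
  shows "tmult (aff_poly k n (c, \<lambda>_ _. 0)) Q X = c * Q X"
  by (simp add: tmult_aff_poly[OF assms] cong: if_cong)

lemma tmult_aff_poly_snoc:
  assumes "length M = K" and "set w \<subseteq> {..<n}"
  shows "tmult (aff_poly (Suc K) n l) Q (M @ [w])
    = tmult (aff_poly K n l) (\<lambda>X. Q (X @ [w])) M
      + (if w = [] then 0 else snd l (hd w) K * Q (M @ [tl w]))"
proof -
  let ?stripped = "\<lambda>R X j. if X ! j \<noteq> [] \<and> hd (X ! j) < n
    then snd l (hd (X ! j)) j * R (X[j := tl (X ! j)]) else 0"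
  have "(\<Sum>j<K. ?stripped Q (M @ [w]) j) = (\<Sum>j<K. ?stripped (\<lambda>X. Q (X @ [w])) M j)"
    using assms(1) by (intro sum.cong refl) (simp add: nth_append list_update_append1)
  moreover have "?stripped Q (M @ [w]) K = (if w = [] then 0 else snd l (hd w) K * Q (M @ [tl w]))"
    using assms by (auto simp: hd_in_set subset_iff)
  ultimately show ?thesis
    using assms(1) by (simp add: tmult_aff_poly)
qed

lemma tmult_sum_right: "tmult p (\<lambda>M. \<Sum>x\<in>A. q x M) X = (\<Sum>x\<in>A. tmult p (q x) X)"
  unfolding tmult_def by (simp add: sum_distrib_left case_prod_unfold sum.swap[of _ A])

lemma tone_snoc: "tone (Suc K) (M @ [w]) = (if w = [] then tone K M else 0)"
  by (simp add: tone_def one_mono_def replicate_append_same[symmetric])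

lemma abp_poly_eq_0:
  assumes "length M \<noteq> k"
  shows "abp_poly k n E u v lab M = 0"
proof -
  have aff: "aff_poly k n l X = 0" if "length X \<noteq> k" for l X
  proof -
    have "X \<noteq> one_mono k" "\<And>i j. X \<noteq> var_mono k i j"
      using that by (auto simp: one_mono_def var_mono_def)
    then show ?thesis by (simp add: aff_poly_def)
  qed
  have tprod_0: "tprod k (map (\<lambda>t. aff_poly k n (L t)) ts) M = 0" for L ts
  proof (cases ts)
    case Nil
    then show ?thesis using assms by (auto simp: tone_def one_mono_def)
  next
    case (Cons t ts')
    have "aff_poly k n (L t) M1 = 0" if "(M1, M2) \<in> splits M" for M1 M2
      using that assms by (intro aff) (simp add: splits_def)
    then show ?thesis
      using Cons by (auto simp: tmult_def intro!: sum.neutral)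
  qed
  show ?thesis unfolding abp_poly_def by (simp add: tprod_0)
qed

lemma Cons_in_paths_iff:
  "x # p \<in> paths E u w \<longleftrightarrow>
     x = u \<and> (if p = [] then u = w else (u, hd p) \<in> E \<and> p \<in> paths E (hd p) w)"
proof (cases p)
  case (Cons y p')
  have "(\<forall>t. Suc t < length (x # p) \<longrightarrow> ((x # p) ! t, (x # p) ! Suc t) \<in> E) \<longleftrightarrow>
      (x, y) \<in> E \<and> (\<forall>t. Suc t < length p \<longrightarrow> (p ! t, p ! Suc t) \<in> E)"
    using Cons by (auto simp: less_Suc_eq_0_disj all_conj_distrib)
  then show ?thesis using Cons by (auto simp: paths_def)
qed (auto simp: paths_def)

lemma paths_unfold:
  "paths E u w = (if u = w then {[u]} else {}) \<union> (\<Union>v\<in>{v. (u, v) \<in> E}. (#) u ` paths E v w)"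
  (is "_ = ?R")
proof -
  have hd_path: "p \<noteq> [] \<and> hd p = v" if "p \<in> paths E v w" for p v
    using that by (simp add: paths_def)
  have "vs \<in> paths E u w \<longleftrightarrow> vs \<in> ?R" for vs
  proof (cases vs)
    case Nil
    then show ?thesis by (auto simp: paths_def)
  next
    case (Cons x p)
    then show ?thesis by (auto simp: Cons_in_paths_iff dest: hd_path)
  qed
  then show ?thesis by blast
qed

lemma paths_potential_mono:
  fixes \<phi> :: "nat \<Rightarrow> 'b::preorder"
  assumes mono: "\<And>x y. (x, y) \<in> E \<Longrightarrow> \<phi> x \<le> \<phi> y" and "vs \<in> paths E u w"
  shows "\<phi> u \<le> \<phi> w"
  using assms(2)
proof (induction vs arbitrary: u)
  case Nil
  then show ?case by (simp add: paths_def)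
next
  case (Cons x p)
  show ?case
  proof (cases "p = []")
    case False
    with Cons.prems have "\<phi> u \<le> \<phi> (hd p)" "\<phi> (hd p) \<le> \<phi> w"
      by (auto simp: Cons_in_paths_iff intro: mono Cons.IH)
    then show ?thesis by (rule order_trans)
  qed (use Cons.prems in \<open>simp add: Cons_in_paths_iff\<close>)
qed

lemma abp_poly_unfold:
  assumes "finite {v. (u, v) \<in> E}" and "\<And>v. (u, v) \<in> E \<Longrightarrow> finite (paths E v w)"
  shows "abp_poly k n E u w lab M = (if u = w then tone k M else 0) +
     (\<Sum>v | (u, v) \<in> E. tmult (aff_poly k n (lab u v)) (abp_poly k n E v w lab) M)"
proof -
  define S where "S = {v. (u, v) \<in> E}"
  define T where
    "T vs = tprod k (map (\<lambda>t. aff_poly k n (lab (vs ! t) (vs ! Suc t))) [0..<length vs - 1])" for vs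
  have T_Cons: "T (u # vs) = tmult (aff_poly k n (lab u v)) (T vs)" if "vs \<in> paths E v w" for v vs
  proof -
    from that have "vs \<noteq> []" "vs ! 0 = v" by (auto simp: paths_def hd_conv_nth)
    moreover from \<open>vs \<noteq> []\<close>
    have "[0..<length (u # vs) - 1] = 0 # map Suc [0..<length vs - 1]"
      by (simp add: map_Suc_upt upt_conv_Cons)
    ultimately show ?thesis unfolding T_def by (simp add: comp_def)
  qed
  have "abp_poly k n E u w lab M
      = (\<Sum>vs\<in>(if u = w then {[u]} else {}). T vs M)
        + (\<Sum>vs\<in>(\<Union>v\<in>S. (#) u ` paths E v w). T vs M)"
    unfolding abp_poly_def T_def S_def paths_unfold[of E u w]
    using assms by (intro sum.union_disjoint) (auto simp: paths_def)
  also have "(\<Sum>vs\<in>(\<Union>v\<in>S. (#) u ` paths E v w). T vs M)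
      = (\<Sum>v\<in>S. \<Sum>vs\<in>paths E v w. T (u # vs) M)"
    using assms unfolding S_def
    by (subst sum.UNION_disjoint) (auto simp: sum.reindex paths_def)
  also have "\<dots> = (\<Sum>v\<in>S. tmult (aff_poly k n (lab u v)) (abp_poly k n E v w lab) M)"
  proof (rule sum.cong[OF refl])
    fix v
    have "(\<Sum>vs\<in>paths E v w. T (u # vs) M)
        = (\<Sum>vs\<in>paths E v w. tmult (aff_poly k n (lab u v)) (T vs) M)"
      by (intro sum.cong refl) (simp add: T_Cons)
    also have "\<dots> = tmult (aff_poly k n (lab u v)) (abp_poly k n E v w lab) M"
      unfolding tmult_sum_right[symmetric] abp_poly_def T_def ..
    finally show "(\<Sum>vs\<in>paths E v w. T (u # vs) M)
        = tmult (aff_poly k n (lab u v)) (abp_poly k n E v w lab) M" .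
  qed
  finally show ?thesis unfolding T_def S_def by simp
qed

locale layered_graph =
  fixes V :: "nat set" and E :: "(nat \<times> nat) set" and layer :: "nat \<Rightarrow> nat" and d :: nat
  assumes finite_V: "finite V"
    and edges_subset: "E \<subseteq> V \<times> V"
    and layer_edge: "(u, v) \<in> E \<Longrightarrow> layer v = Suc (layer u)"
    and layer_less: "v \<in> V \<Longrightarrow> layer v < d"
begin

lemma finite_successors: "finite {v. (u, v) \<in> E}"
  using edges_subset by (intro finite_subset[OF _ finite_V]) auto

lemma successor_induct [case_names step]:
  assumes "\<And>u. (\<And>v. (u, v) \<in> E \<Longrightarrow> P v) \<Longrightarrow> P u"
  shows "P u"
proof (induction "d - layer u" arbitrary: u rule: less_induct)
  case less
  have "d - layer v < d - layer u" if "(u, v) \<in> E" for v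
    using that edges_subset layer_edge[OF that] layer_less[of v] by auto
  then show ?case using assms less by blast
qed

lemma finite_paths: "finite (paths E u w)"
proof (induction u rule: successor_induct)
  case (step u)
  then show ?case using finite_successors by (subst paths_unfold) auto
qed

lemma abp_poly_step:
  "abp_poly k n E u w lab M = (if u = w then tone k M else 0) +
     (\<Sum>v | (u, v) \<in> E. tmult (aff_poly k n (lab u v)) (abp_poly k n E v w lab) M)"
  using finite_successors finite_paths by (rule abp_poly_unfold)

end

definition tracked_edges :: "(nat \<times> nat) set \<Rightarrow> nat \<Rightarrow> (nat \<times> nat) set" where
  "tracked_edges E L =
     {(prod_encode (u, t), prod_encode (v, t)) | u v t. (u, v) \<in> E \<and> t \<le> L} \<union>
     {(prod_encode (u, t), prod_encode (v, Suc t)) | u v t. (u, v) \<in> E \<and> t < L}"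

text \<open>
  Stay edges may keep the original label: aff_poly K ignores the coefficients of the variables
  of the last factor (index K, 0-based), which advance edges read off instead.
\<close>
definition tracked_label ::
    "(nat \<Rightarrow> nat \<Rightarrow> 'a::zero aff_form) \<Rightarrow> nat list \<Rightarrow> nat \<Rightarrow> nat \<Rightarrow> nat \<Rightarrow> 'a aff_form" where
  "tracked_label lab m K x y =
     (let (u, t) = prod_decode x; (v, t') = prod_decode y
      in if t' = t then lab u v else (snd (lab u v) (m ! t) K, \<lambda>_ _. 0))"

lemma sum_tracked_successors:
  assumes "t \<le> L" and "finite {v. (u, v) \<in> E}"
  shows "(\<Sum>y | (prod_encode (u, t), y) \<in> tracked_edges E L. F y) =
     (\<Sum>v | (u, v) \<in> E. F (prod_encode (v, t))) +
     (if t < L then (\<Sum>v | (u, v) \<in> E. F (prod_encode (v, Suc t))) else 0)"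
proof -
  let ?S = "{v. (u, v) \<in> E}"
  let ?stay = "(\<lambda>v. prod_encode (v, t)) ` ?S"
  let ?advance = "if t < L then (\<lambda>v. prod_encode (v, Suc t)) ` ?S else {}"
  have "{y. (prod_encode (u, t), y) \<in> tracked_edges E L} = ?stay \<union> ?advance"
    using assms(1) unfolding tracked_edges_def by auto
  moreover have "(\<Sum>y\<in>?stay \<union> ?advance. F y) = (\<Sum>y\<in>?stay. F y) + (\<Sum>y\<in>?advance. F y)"
    using assms(2) by (intro sum.union_disjoint) auto
  ultimately show ?thesis
    by (simp add: sum.reindex inj_on_def)
qed

context layered_graph
begin

lemma layered_graph_tracked:
  assumes "L \<le> D"
  shows "layered_graph (prod_encode ` (V \<times> {..D})) (tracked_edges E L)
    (\<lambda>x. layer (fst (prod_decode x))) d"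
  using finite_V edges_subset layer_edge layer_less assms
  by unfold_locales (auto simp: tracked_edges_def)

lemma abp_poly_tracked:
  fixes lab :: "nat \<Rightarrow> nat \<Rightarrow> 'a::comm_ring_1 aff_form"
  assumes m: "set m \<subseteq> {..<n}" and "t \<le> length m"
  shows "abp_poly K n (tracked_edges E (length m)) (prod_encode (u, t)) (prod_encode (w, length m))
           (tracked_label lab m K)
         = (\<lambda>X. abp_poly (Suc K) n E u w lab (X @ [drop t m]))"
  using assms(2)
proof (induction u arbitrary: t rule: successor_induct)
  case (step u)
  let ?L = "length m"
  define P' where
    "P' x = abp_poly K n (tracked_edges E ?L) x (prod_encode (w, ?L)) (tracked_label lab m K)" for x
  define P where "P v = abp_poly (Suc K) n E v w lab" for v
  interpret tracked: layered_graph "prod_encode ` (V \<times> {..?L})" "tracked_edges E ?L"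
      "\<lambda>x. layer (fst (prod_decode x))" d
    by (rule layered_graph_tracked) simp
  have IH: "P' (prod_encode (v, t')) = (\<lambda>X. P v (X @ [drop t' m]))"
    if "(u, v) \<in> E" and "t' \<le> ?L" for v t'
    unfolding P'_def P_def using step.IH[OF that] .
  have drop_m: "drop t m = [] \<longleftrightarrow> t = ?L" "t < ?L \<Longrightarrow> hd (drop t m) = m ! t"
    "tl (drop t m) = drop (Suc t) m" "set (drop t m) \<subseteq> {..<n}"
    using step.prems m by (auto simp: hd_drop_conv_nth drop_Suc tl_drop dest: in_set_dropD)
  have "P' (prod_encode (u, t)) X = P u (X @ [drop t m])" for X
  proof (cases "length X = K")
    case False
    then show ?thesis unfolding P'_def P_def by (simp add: abp_poly_eq_0)
  next
    case True
    have "P' (prod_encode (u, t)) X = (if u = w \<and> t = ?L then tone K X else 0)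
        + (\<Sum>v | (u, v) \<in> E. tmult (aff_poly K n (lab u v)) (P' (prod_encode (v, t))) X)
        + (if t < ?L
           then \<Sum>v | (u, v) \<in> E. snd (lab u v) (m ! t) K * P' (prod_encode (v, Suc t)) X
           else 0)"
      unfolding P'_def
      by (simp add: tracked.abp_poly_step sum_tracked_successors[OF step.prems finite_successors]
          tracked_label_def tmult_aff_poly_const True add.assoc)
    also have "\<dots> = (if u = w then tone (Suc K) (X @ [drop t m]) else 0)
        + (\<Sum>v | (u, v) \<in> E. tmult (aff_poly (Suc K) n (lab u v)) (P v) (X @ [drop t m]))"
      using step.prems
      by (simp add: IH tone_snoc drop_m tmult_aff_poly_snoc[OF True drop_m(4)] sum.distrib)
    also have "\<dots> = P u (X @ [drop t m])"
      unfolding P_def by (rule abp_poly_step[symmetric])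
    finally show ?thesis .
  qed
  then show ?case unfolding P'_def P_def by blast
qed

text \<open>Padding the levels up to d makes the node count exactly card V * (d + 1).\<close>
lemma abp_computes_tracked:
  assumes "L < d" and "src \<in> V" and "snk \<in> V" and "layer src = 0" and "layer snk = d - 1"
  shows "abp_computes K n d (card V * (d + 1))
           (abp_poly K n (tracked_edges E L) (prod_encode (src, 0)) (prod_encode (snk, L)) lab)"
proof -
  let ?V = "prod_encode ` (V \<times> {..d})"
  interpret tracked: layered_graph ?V "tracked_edges E L" "\<lambda>x. layer (fst (prod_decode x))" d
    using assms(1) by (intro layered_graph_tracked) simp
  have "card ?V = card V * (d + 1)"
    by (simp add: card_image inj_prod_encode card_cartesian_product)
  then show ?thesis
    unfolding abp_computes_def
    using tracked.finite_V tracked.edges_subset tracked.layer_edge tracked.layer_less assms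
    by (intro exI[of _ ?V] exI[of _ "tracked_edges E L"]
        exI[of _ "\<lambda>x. layer (fst (prod_decode x))"] exI[of _ "prod_encode (src, 0)"]
        exI[of _ "prod_encode (snk, L)"] exI[of _ lab]) auto
qed

lemma paths_tracked_empty:
  assumes "d \<le> L" and "layer src = 0" and "snk \<in> V"
  shows "paths (tracked_edges E L) (prod_encode (src, 0)) (prod_encode (snk, L)) = {}"
proof (rule ccontr)
  define \<phi> where "\<phi> x = int (layer (fst (prod_decode x))) - int (snd (prod_decode x))" for x
  assume "paths (tracked_edges E L) (prod_encode (src, 0)) (prod_encode (snk, L)) \<noteq> {}"
  then obtain vs where "vs \<in> paths (tracked_edges E L) (prod_encode (src, 0)) (prod_encode (snk, L))"
    by blast
  then have "\<phi> (prod_encode (src, 0)) \<le> \<phi> (prod_encode (snk, L))"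
    by (rule paths_potential_mono[rotated]) (auto simp: tracked_edges_def \<phi>_def layer_edge)
  then show False
    using assms layer_less[OF assms(3)] by (simp add: \<phi>_def)
qed

end

lemma abp_computes_zero:
  assumes "2 \<le> S" and "1 \<le> d"
  shows "abp_computes K n d S (\<lambda>_. 0)"
proof -
  have "paths {} 0 (Suc 0) = {}"
    by (subst paths_unfold) simp
  then have "(\<lambda>_. 0) = abp_poly K n {} 0 (Suc 0) lab" for lab
    by (simp add: abp_poly_def)
  then show ?thesis
    unfolding abp_computes_def using assms
    by (intro exI[of _ "{..<S}"] exI[of _ "{}"] exI[of _ "\<lambda>x. if x = 0 then 0 else d - 1"]
        exI[of _ 0] exI[of _ "Suc 0"] exI[of _ "\<lambda>_ _. (0, \<lambda>_ _. 0)"]) auto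
qed

theorem lemma12:
  fixes f :: "'a::field tpoly" and k n d s :: nat and m :: "nat list"
  assumes "1 \<le> k"
    and "f \<in> S_abp k n d s"
    and "set m \<subseteq> {..<n}"
  shows "abp_computes (k - 1) n d (s * (d + 1)) (\<lambda>M. f (M @ [m]))"
proof -
  obtain V E layer src snk lab where "finite V" and "card V = s" and "E \<subseteq> V \<times> V"
    and "\<forall>(u, v)\<in>E. layer v = Suc (layer u)" and "\<forall>v\<in>V. layer v < d"
    and src: "src \<in> V" "layer src = 0" and snk: "snk \<in> V" "layer snk = d - 1"
    and f: "f = abp_poly k n E src snk lab"
    using assms(2) unfolding S_abp_def abp_computes_def by blast
  then interpret layered_graph V E layer d
    by unfold_locales auto
  obtain K where k: "k = Suc K" using assms(1) by (cases k) auto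
  have coeff: "(\<lambda>M. f (M @ [m])) = abp_poly K n (tracked_edges E (length m))
      (prod_encode (src, 0)) (prod_encode (snk, length m)) (tracked_label lab m K)"
    using abp_poly_tracked[OF assms(3), of 0 K src snk lab] f k by simp
  show ?thesis
  proof (cases "length m < d")
    case True
    then show ?thesis
      using abp_computes_tracked[OF True src(1) snk(1) src(2) snk(2)] coeff k \<open>card V = s\<close>
      by simp
  next
    case False
    have "1 \<le> d" "1 \<le> s"
      using layer_less[OF src(1)] finite_V src(1) \<open>card V = s\<close>
      by (auto simp: Suc_le_eq card_gt_0_iff)
    then have "2 \<le> s * (d + 1)"
      using mult_le_mono[of 1 s 2 "d + 1"] by simp
    with \<open>1 \<le> d\<close> show ?thesis
      using coeff paths_tracked_empty[of "length m" src snk] False src snk k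
      by (simp add: abp_poly_def abp_computes_zero)
  qed
qed

end
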